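(* Let $G$ be a strategic game with players $1,\dots,n$ and let $\phi=(\phi_1,\dots,\phi_n)$ be a sequence in which each $\phi_i$ is a positive optimality condition for player $i$. Then the $\mathcal{L}_\nu$-formula $$(\mathit{rat}_\phi \wedge \Box^*\mathit{rat}_\phi)\rightarrow \nu X.\,O_\phi X$$ is a theorem of the proof system $\mathbf{P}$.
   Context: Strategic game: $G=(T_1,\dots,T_n,<_1,\dots,<_n)$ where $T_i$ is an arbitrary nonempty (possibly infinite) set of strategies of player $i$, and $<_i$ is a total linear order on $T=\prod_{i=1}^n T_i$; $\ge_i$ is its reflexive closure. For a profile $s$ write $s_{-i}$ for $(s_j)_{j\neq i}$ and $(s_i,t_{-i})$ for the profile agreeing with $t$ except in coordinate $i$, where it is $s_i$. A restriction of $G$ is $S=(S_1,\dots,S_n)$ with $S_i\subseteq T_i$. Language $\mathcal{L}_O$: first-order formulas built from atoms $C(a)$ and $a\ge^i_c b$ ($i\in[1..n]$, $a,b,c$ variables or the constant $o$) using $\neg,\wedge,\exists x$. An optimality model is $(G,G',s)$ with $G'$ a restriction and $s\in T$; an assignment $\alpha$ maps variables to $T$ and $o$ to $s$; $(G,G',s)\models_\alpha C(x)$ iff $\alpha(x)_j\in G'_j$ for all $j$; $(G,G',s)\models_\alpha x\ge^i_z y$ iff $(\alpha(x)_i,\alpha(z)_{-i})\ge_i(\alpha(y)_i,\alpha(z)_{-i})$; other connectives as usual. An optimality condition for player $i$ is a closed $\mathcal{L}_O$-formula all of whose atoms of the form $a\ge^j_c b$ have $j=i$; it is positive if every occurrence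 of an atom $C(\cdot)$ lies under an even number of negations. For $s_i\in T_i$ and restriction $S$, $\phi_i(s_i,S)$ means $(G,S,s)\models\phi_i$ for a profile $s$ with $i$-th component $s_i$ (the other components are irrelevant). Belief model for $G$: $(\Omega,\bar s_1,\dots,\bar s_n,P_1,\dots,P_n)$ with $\Omega\neq\emptyset$, $\bar s_i:\Omega\to T_i$, $P_i:\Omega\to 2^\Omega$; $\bar s(\omega)=(\bar s_1(\omega),\dots,\bar s_n(\omega))$. For $E\subseteq\Omega$, $G_E$ is the restriction with $(G_E)_i=\{\bar s_i(u):u\in E\}$. Language $\mathcal{L}_\nu$ (one set variable $X$): $\psi::=\mathit{rat}_{\phi_i}\mid X\mid \psi\wedge\psi\mid\neg\psi\mid\Box_i\psi\mid O_{\phi_i}\psi\mid\nu X.\psi$, with $\phi_i$ an optimality condition for player $i$ and, in $\nu X.\psi$, $\psi$ containing no $\nu$. Abbreviations: $\mathit{rat}_\phi=\bigwedge_i\mathit{rat}_{\phi_i}$, $\Box\psi=\bigwedge_i\Box_i\psi$, $O_\phi\psi=\bigwedge_i O_{\phi_i}\psi$, $\rightarrow$ as usual, and $\Box^*\psi:=\nu X.\Box(X\wedge\psi)$. A formula is positive in $X$ if each occurrence of $X$ is under an even number of negations and lies in the scope of $O_{\phi_i}$ only when $\phi_i$ is positive. $\psi[X\mapsto\chi]$ denotes substitution of $\chi$ for each occurrence of $X$. Proof system $\mathbf{P}$: standard propositional reasoning (all propositional tautologies and modus ponens), plus, for positive optimality conditions $\phi_i$ and $\psi$ positive in $X$: axiom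 ($\mathit{rat}Dis$): $\mathit{rat}_\phi\rightarrow(\Box\chi\rightarrow O_\phi\chi)$; axiom ($\nu Dis$): $\nu X.\psi\rightarrow\psi[X\mapsto\nu X.\psi]$; rule ($\nu Ind$): from $\chi\rightarrow\psi[X\mapsto\chi]$ infer $\chi\rightarrow\nu X.\psi$. *)

theory Defs
  imports Main
begin

datatype oterm = OVar nat | OConst

text \<open>Geq i a c b stands for the atom  a >=^i_c b.\<close>
datatype ofm =
    C oterm
  | Geq nat oterm oterm oterm
  | ONeg ofm
  | OAnd ofm ofm
  | OEx nat ofm

fun tvars :: "oterm \<Rightarrow> nat set" where
  "tvars (OVar x) = {x}"
| "tvars OConst = {}"

fun ofv :: "ofm \<Rightarrow> nat set" where
  "ofv (C a) = tvars a"
| "ofv (Geq i a c b) = tvars a \<union> tvars c \<union> tvars b"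
| "ofv (ONeg f) = ofv f"
| "ofv (OAnd f g) = ofv f \<union> ofv g"
| "ofv (OEx x f) = ofv f - {x}"

fun only_player :: "nat \<Rightarrow> ofm \<Rightarrow> bool" where
  "only_player i (C a) = True"
| "only_player i (Geq j a c b) = (j = i)"
| "only_player i (ONeg f) = only_player i f"
| "only_player i (OAnd f g) = (only_player i f \<and> only_player i g)"
| "only_player i (OEx x f) = only_player i f"

definition optcond :: "nat \<Rightarrow> ofm \<Rightarrow> bool" where
  "optcond i f \<longleftrightarrow> ofv f = {} \<and> only_player i f"

text \<open>C_pol b f: every occurrence of an atom C(.) in f lies under an even number
  of negations when b = True (counting the negations around f as parity b).\<close>
fun C_pol :: "bool \<Rightarrow> ofm \<Rightarrow> bool" where
  "C_pol b (C a) = b"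
| "C_pol b (Geq j a c d) = True"
| "C_pol b (ONeg f) = C_pol (\<not> b) f"
| "C_pol b (OAnd f g) = (C_pol b f \<and> C_pol b g)"
| "C_pol b (OEx x f) = C_pol b f"

definition positive_oc :: "ofm \<Rightarrow> bool" where
  "positive_oc f \<longleftrightarrow> C_pol True f"

datatype nfm =
    Rat nat ofm
  | Xv
  | And nfm nfm
  | Neg nfm
  | Box nat nfm
  | Opt nat ofm nfm
  | Nu nfm

fun nu_free :: "nfm \<Rightarrow> bool" where
  "nu_free (Rat i f) = True"
| "nu_free Xv = True"
| "nu_free (And a b) = (nu_free a \<and> nu_free b)"
| "nu_free (Neg a) = nu_free a"
| "nu_free (Box i a) = nu_free a"
| "nu_free (Opt i f a) = nu_free a"
| "nu_free (Nu a) = False"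

fun wf :: "nat \<Rightarrow> nfm \<Rightarrow> bool" where
  "wf n (Rat i f) = (i \<in> {1..n} \<and> optcond i f)"
| "wf n Xv = True"
| "wf n (And a b) = (wf n a \<and> wf n b)"
| "wf n (Neg a) = wf n a"
| "wf n (Box i a) = (i \<in> {1..n} \<and> wf n a)"
| "wf n (Opt i f a) = (i \<in> {1..n} \<and> optcond i f \<and> wf n a)"
| "wf n (Nu a) = (nu_free a \<and> wf n a)"

text \<open>Substitution psi[X := chi]; X is bound under Nu, so Nu-subformulas are untouched.\<close>
fun subst :: "nfm \<Rightarrow> nfm \<Rightarrow> nfm" where
  "subst (Rat i f) c = Rat i f"
| "subst Xv c = c"
| "subst (And a b) c = And (subst a c) (subst b c)"
| "subst (Neg a) c = Neg (subst a c)"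
| "subst (Box i a) c = Box i (subst a c)"
| "subst (Opt i f a) c = Opt i f (subst a c)"
| "subst (Nu a) c = Nu a"

fun occX :: "nfm \<Rightarrow> bool" where
  "occX (Rat i f) = False"
| "occX Xv = True"
| "occX (And a b) = (occX a \<or> occX b)"
| "occX (Neg a) = occX a"
| "occX (Box i a) = occX a"
| "occX (Opt i f a) = occX a"
| "occX (Nu a) = False"

text \<open>X_pol b psi: every free occurrence of X lies under an even number of negations
  (parity b) and lies in the scope of O_{phi_i} only if phi_i is positive.\<close>
fun X_pol :: "bool \<Rightarrow> nfm \<Rightarrow> bool" where
  "X_pol b (Rat i f) = True"
| "X_pol b Xv = b"
| "X_pol b (And p q) = (X_pol b p \<and> X_pol b q)"
| "X_pol b (Neg p) = X_pol (\<not> b) p"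
| "X_pol b (Box i p) = X_pol b p"
| "X_pol b (Opt i f p) = (X_pol b p \<and> (occX p \<longrightarrow> positive_oc f))"
| "X_pol b (Nu p) = True"

definition positive_in_X :: "nfm \<Rightarrow> bool" where
  "positive_in_X p \<longleftrightarrow> X_pol True p"

definition Imp :: "nfm \<Rightarrow> nfm \<Rightarrow> nfm" where
  "Imp a b = Neg (And a (Neg b))"

fun BigAnd :: "nfm list \<Rightarrow> nfm" where
  "BigAnd [] = Xv"   \<comment> \<open>never used: n >= 1\<close>
| "BigAnd [a] = a"
| "BigAnd (a # as) = And a (BigAnd as)"

definition ratAll :: "nat \<Rightarrow> (nat \<Rightarrow> ofm) \<Rightarrow> nfm" where
  "ratAll n phi = BigAnd (map (\<lambda>i. Rat i (phi i)) [1..<Suc n])"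

definition BoxAll :: "nat \<Rightarrow> nfm \<Rightarrow> nfm" where
  "BoxAll n p = BigAnd (map (\<lambda>i. Box i p) [1..<Suc n])"

definition OptAll :: "nat \<Rightarrow> (nat \<Rightarrow> ofm) \<Rightarrow> nfm \<Rightarrow> nfm" where
  "OptAll n phi p = BigAnd (map (\<lambda>i. Opt i (phi i) p) [1..<Suc n])"

definition BoxStar :: "nat \<Rightarrow> nfm \<Rightarrow> nfm" where
  "BoxStar n p = Nu (BoxAll n (And Xv p))"

definition pos_seq :: "nat \<Rightarrow> (nat \<Rightarrow> ofm) \<Rightarrow> bool" where
  "pos_seq n phi \<longleftrightarrow> (\<forall>i\<in>{1..n}. optcond i (phi i) \<and> positive_oc (phi i))"

text \<open>Propositional evaluation, treating every non-Boolean subformula as an atom.\<close>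
fun peval :: "(nfm \<Rightarrow> bool) \<Rightarrow> nfm \<Rightarrow> bool" where
  "peval v (And a b) = (peval v a \<and> peval v b)"
| "peval v (Neg a) = (\<not> peval v a)"
| "peval v a = v a"

definition ptaut :: "nfm \<Rightarrow> bool" where
  "ptaut p \<longleftrightarrow> (\<forall>v. peval v p)"

inductive provable :: "nat \<Rightarrow> nfm \<Rightarrow> bool" for n :: nat where
  taut: "wf n p \<Longrightarrow> ptaut p \<Longrightarrow> provable n p"
| mp: "provable n (Imp p q) \<Longrightarrow> provable n p \<Longrightarrow> provable n q"
| ratDis: "pos_seq n phi \<Longrightarrow> wf n c \<Longrightarrow>
    provable n (Imp (ratAll n phi) (Imp (BoxAll n c) (OptAll n phi c)))"
| nuDis: "wf n (Nu p) \<Longrightarrow> positive_in_X p \<Longrightarrow>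
    provable n (Imp (Nu p) (subst p (Nu p)))"
| nuInd: "wf n (Nu p) \<Longrightarrow> positive_in_X p \<Longrightarrow> wf n c \<Longrightarrow>
    provable n (Imp c (subst p c)) \<Longrightarrow> provable n (Imp c (Nu p))"

end

theory Submission
  imports Defs
begin

text \<open>
  Put  c := Box* rat \<and> rat.  By the axiom nuDis,
  Box* rat unfolds to  Box(Box* rat \<and> rat) = Box c, and together with rat the axiom
  ratDis yields  O c.  Hence  c \<rightarrow> O c, i.e. c is a post-fixpoint of the
  positive operator  X \<mapsto> O X, so the induction rule nuInd gives
  c \<rightarrow> \<nu>X. O X; commuting the conjunction gives the theorem.
\<close>

lemma BigAnd_map_prop:
  assumes "P Xv" "\<And>a b. P a \<Longrightarrow> P b \<Longrightarrow> P (And a b)" "\<forall>x\<in>set xs. P (f x)"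
  shows "P (BigAnd (map f xs))"
  using assms(3)
proof (induction xs)
  case Nil then show ?case using assms(1) by simp
next
  case (Cons a xs) then show ?case using assms(2) by (cases xs) auto
qed

lemma subst_BigAnd:
  "xs \<noteq> [] \<Longrightarrow> subst (BigAnd (map f xs)) c = BigAnd (map (\<lambda>x. subst (f x) c) xs)"
proof (induction xs)
  case Nil then show ?case by simp
next
  case (Cons a xs) then show ?case by (cases xs) auto
qed

lemma wf_ratAll: "\<forall>i\<in>{1..n}. optcond i (phi i) \<Longrightarrow> wf n (ratAll n phi)"
  unfolding ratAll_def by (rule BigAnd_map_prop[where P="wf n"]) auto

lemma wf_BoxAll: "wf n p \<Longrightarrow> wf n (BoxAll n p)"
  unfolding BoxAll_def by (rule BigAnd_map_prop[where P="wf n"]) auto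

lemma wf_OptAll: "\<forall>i\<in>{1..n}. optcond i (phi i) \<Longrightarrow> wf n p \<Longrightarrow> wf n (OptAll n phi p)"
  unfolding OptAll_def by (rule BigAnd_map_prop[where P="wf n"]) auto

lemma nu_free_ratAll: "nu_free (ratAll n phi)"
  unfolding ratAll_def by (rule BigAnd_map_prop[where P=nu_free]) auto

lemma nu_free_BoxAll: "nu_free p \<Longrightarrow> nu_free (BoxAll n p)"
  unfolding BoxAll_def by (rule BigAnd_map_prop[where P=nu_free]) auto

lemma nu_free_OptAll: "nu_free p \<Longrightarrow> nu_free (OptAll n phi p)"
  unfolding OptAll_def by (rule BigAnd_map_prop[where P=nu_free]) auto

lemma X_pol_ratAll: "X_pol True (ratAll n phi)"
  unfolding ratAll_def by (rule BigAnd_map_prop[where P="X_pol True"]) auto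

lemma positive_in_X_BoxAll: "X_pol True p \<Longrightarrow> positive_in_X (BoxAll n p)"
  unfolding BoxAll_def positive_in_X_def
  by (rule BigAnd_map_prop[where P="X_pol True"]) auto

text \<open>Positivity of the optimality conditions is exactly what makes X positive in O X.\<close>
lemma positive_in_X_OptAll:
  "\<forall>i\<in>{1..n}. positive_oc (phi i) \<Longrightarrow> positive_in_X (OptAll n phi Xv)"
  unfolding OptAll_def positive_in_X_def
  by (rule BigAnd_map_prop[where P="X_pol True"]) auto

lemma subst_ratAll: "1 \<le> n \<Longrightarrow> subst (ratAll n phi) c = ratAll n phi"
  unfolding ratAll_def by (subst subst_BigAnd) auto

lemma subst_BoxAll: "1 \<le> n \<Longrightarrow> subst (BoxAll n p) c = BoxAll n (subst p c)"
  unfolding BoxAll_def by (subst subst_BigAnd) auto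

lemma subst_OptAll: "1 \<le> n \<Longrightarrow> subst (OptAll n phi p) c = OptAll n phi (subst p c)"
  unfolding OptAll_def by (subst subst_BigAnd) auto

lemma imp_trans:
  assumes "wf n a" "wf n b" "wf n c"
    and "provable n (Imp a b)" "provable n (Imp b c)"
  shows "provable n (Imp a c)"
proof -
  have "provable n (Imp (Imp a b) (Imp (Imp b c) (Imp a c)))"
    by (rule provable.taut) (auto simp: assms(1-3) Imp_def ptaut_def)
  then show ?thesis using assms(4,5) by (blast intro: provable.mp)
qed

lemma imp_combine:
  assumes "wf n a" "wf n b" "wf n x" "wf n y"
    and "provable n (Imp a x)" "provable n (Imp b (Imp x y))"
  shows "provable n (Imp (And a b) y)"
proof -
  have "provable n (Imp (Imp a x) (Imp (Imp b (Imp x y)) (Imp (And a b) y)))"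
    by (rule provable.taut) (auto simp: assms(1-4) Imp_def ptaut_def)
  then show ?thesis using assms(5,6) by (blast intro: provable.mp)
qed

lemma imp_and_commute:
  assumes "wf n a" "wf n b" "wf n y" "provable n (Imp (And a b) y)"
  shows "provable n (Imp (And b a) y)"
proof -
  have "provable n (Imp (Imp (And a b) y) (Imp (And b a) y))"
    by (rule provable.taut) (auto simp: assms(1-3) Imp_def ptaut_def)
  then show ?thesis using assms(4) by (blast intro: provable.mp)
qed

lemma wf_BoxStar: "wf n p \<Longrightarrow> nu_free p \<Longrightarrow> wf n (BoxStar n p)"
  unfolding BoxStar_def by (simp add: wf_BoxAll nu_free_BoxAll)

lemma BoxStar_unfold:
  assumes "1 \<le> n" "wf n p" "nu_free p" "X_pol True p" "subst p (BoxStar n p) = p"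
  shows "provable n (Imp (BoxStar n p) (BoxAll n (And (BoxStar n p) p)))"
proof -
  have "provable n (Imp (BoxStar n p) (subst (BoxAll n (And Xv p)) (BoxStar n p)))"
    unfolding BoxStar_def
    using assms(2-4) by (intro provable.nuDis positive_in_X_BoxAll)
      (simp_all add: wf_BoxAll nu_free_BoxAll)
  then show ?thesis using assms(1,5) by (simp add: subst_BoxAll)
qed

lemma rat_common_belief_post_fixpoint:
  assumes "1 \<le> n" "pos_seq n phi"
  defines "c \<equiv> And (BoxStar n (ratAll n phi)) (ratAll n phi)"
  shows "provable n (Imp c (OptAll n phi c))"
proof -
  let ?R = "ratAll n phi"
  have oc: "\<forall>i\<in>{1..n}. optcond i (phi i)" using assms(2) by (simp add: pos_seq_def)
  have wfR: "wf n ?R" by (rule wf_ratAll[OF oc])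
  have wfB: "wf n (BoxStar n ?R)" by (rule wf_BoxStar[OF wfR nu_free_ratAll])
  have wfc: "wf n c" unfolding c_def using wfR wfB by simp
  have unfold: "provable n (Imp (BoxStar n ?R) (BoxAll n c))"
    unfolding c_def using assms(1) wfR
    by (intro BoxStar_unfold) (simp_all add: nu_free_ratAll X_pol_ratAll subst_ratAll)
  have ratdis: "provable n (Imp ?R (Imp (BoxAll n c) (OptAll n phi c)))"
    by (rule provable.ratDis[OF assms(2) wfc])
  have "provable n (Imp (And (BoxStar n ?R) ?R) (OptAll n phi c))"
    by (rule imp_combine[OF wfB wfR wf_BoxAll[OF wfc] wf_OptAll[OF oc wfc] unfold ratdis])
  then show ?thesis by (simp only: c_def)
qed

theorem theorem1:
  fixes n :: nat and phi :: "nat \<Rightarrow> ofm"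
  assumes "1 \<le> n"
    and "pos_seq n phi"
  shows "provable n (Imp (And (ratAll n phi) (BoxStar n (ratAll n phi)))
                         (Nu (OptAll n phi Xv)))"
proof -
  let ?R = "ratAll n phi" and ?c = "And (BoxStar n (ratAll n phi)) (ratAll n phi)"
  have oc: "\<forall>i\<in>{1..n}. optcond i (phi i)"
    and pos: "\<forall>i\<in>{1..n}. positive_oc (phi i)" using assms(2) by (simp_all add: pos_seq_def)
  have wfR: "wf n ?R" and wfB: "wf n (BoxStar n ?R)"
    using wf_ratAll[OF oc] wf_BoxStar nu_free_ratAll by auto
  have wfNu: "wf n (Nu (OptAll n phi Xv))"
    by (simp add: wf_OptAll[OF oc] nu_free_OptAll)
  have "provable n (Imp ?c (subst (OptAll n phi Xv) ?c))"
    using rat_common_belief_post_fixpoint[OF assms] assms(1) by (simp add: subst_OptAll)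
  then have "provable n (Imp ?c (Nu (OptAll n phi Xv)))"
    using wfNu wfR wfB positive_in_X_OptAll[OF pos] by (intro provable.nuInd) simp_all
  then show ?thesis by (rule imp_and_commute[OF wfB wfR wfNu])
qed

end
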